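(* In the directed variant of the greedy routing network creation game on any finite point set $\mathcal P$ in any metric space, a strategy profile is a pure Nash equilibrium if and only if it is a social optimum.
   Context: Let $\mathcal P$ be a finite set of $n\ge2$ points (agents) in a metric space with metric $d$. In the directed variant each agent $u$ chooses a strategy $S_u\subseteq\{(u,v):v\in\mathcal P\setminus\{u\}\}$ of directed edges, which it owns. A profile $\mathbf s=(S_u)_u$ induces the directed network $G(\mathbf s)=(\mathcal P,\bigcup_u S_u)$. A greedy routing path from $u$ to $w$ is a directed path $(x_1=u,\dots,x_j=w)$ in $G(\mathbf s)$ with $d(x_i,w)>d(x_{i+1},w)$ for all $i$; $u$ is greedy connected if it has a greedy routing path to every other agent. The cost of $u$ is $c_u(\mathbf s)=|S_u|$ if $u$ is greedy connected in $G(\mathbf s)$ and $\infty$ otherwise; the social cost is $c(\mathbf s)=\sum_u c_u(\mathbf s)$. A pure Nash equilibrium (NE) is a profile in which no agent can strictly decrease its cost by unilaterally changing its strategy; a social optimum (SO) is a profile minimizing the social cost. *)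

theory Defs
  imports Main "HOL-Library.Extended_Nat"
begin

definition metric_on :: "'a set \<Rightarrow> ('a \<Rightarrow> 'a \<Rightarrow> real) \<Rightarrow> bool" where
  "metric_on P d \<longleftrightarrow>
     (\<forall>x\<in>P. \<forall>y\<in>P. d x y \<ge> 0 \<and> (d x y = 0 \<longleftrightarrow> x = y) \<and> d x y = d y x) \<and>
     (\<forall>x\<in>P. \<forall>y\<in>P. \<forall>z\<in>P. d x z \<le> d x y + d y z)"

definition strategies :: "'a set \<Rightarrow> 'a \<Rightarrow> ('a \<times> 'a) set set" where
  "strategies P u = Pow {(u, v) | v. v \<in> P \<and> v \<noteq> u}"

definition valid_profile :: "'a set \<Rightarrow> ('a \<Rightarrow> ('a \<times> 'a) set) \<Rightarrow> bool" where
  "valid_profile P s \<longleftrightarrow> (\<forall>u\<in>P. s u \<in> strategies P u)"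

definition edges :: "'a set \<Rightarrow> ('a \<Rightarrow> ('a \<times> 'a) set) \<Rightarrow> ('a \<times> 'a) set" where
  "edges P s = (\<Union>u\<in>P. s u)"

definition greedy_path :: "('a \<Rightarrow> 'a \<Rightarrow> real) \<Rightarrow> ('a \<times> 'a) set \<Rightarrow> 'a list \<Rightarrow> 'a \<Rightarrow> 'a \<Rightarrow> bool" where
  "greedy_path d E xs u w \<longleftrightarrow> xs \<noteq> [] \<and> hd xs = u \<and> last xs = w \<and>
     (\<forall>i. Suc i < length xs \<longrightarrow> (xs ! i, xs ! Suc i) \<in> E \<and> d (xs ! i) w > d (xs ! Suc i) w)"

definition greedy_connected :: "'a set \<Rightarrow> ('a \<Rightarrow> 'a \<Rightarrow> real) \<Rightarrow> ('a \<times> 'a) set \<Rightarrow> 'a \<Rightarrow> bool" where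
  "greedy_connected P d E u \<longleftrightarrow> (\<forall>w\<in>P - {u}. \<exists>xs. greedy_path d E xs u w)"

definition agent_cost :: "'a set \<Rightarrow> ('a \<Rightarrow> 'a \<Rightarrow> real) \<Rightarrow> ('a \<Rightarrow> ('a \<times> 'a) set) \<Rightarrow> 'a \<Rightarrow> enat" where
  "agent_cost P d s u = (if greedy_connected P d (edges P s) u then enat (card (s u)) else \<infinity>)"

definition social_cost :: "'a set \<Rightarrow> ('a \<Rightarrow> 'a \<Rightarrow> real) \<Rightarrow> ('a \<Rightarrow> ('a \<times> 'a) set) \<Rightarrow> enat" where
  "social_cost P d s = (\<Sum>u\<in>P. agent_cost P d s u)"

definition nash_equilibrium :: "'a set \<Rightarrow> ('a \<Rightarrow> 'a \<Rightarrow> real) \<Rightarrow> ('a \<Rightarrow> ('a \<times> 'a) set) \<Rightarrow> bool" where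
  "nash_equilibrium P d s \<longleftrightarrow> valid_profile P s \<and>
     (\<forall>u\<in>P. \<forall>S'\<in>strategies P u. agent_cost P d s u \<le> agent_cost P d (s(u := S')) u)"

definition social_optimum :: "'a set \<Rightarrow> ('a \<Rightarrow> 'a \<Rightarrow> real) \<Rightarrow> ('a \<Rightarrow> ('a \<times> 'a) set) \<Rightarrow> bool" where
  "social_optimum P d s \<longleftrightarrow> valid_profile P s \<and>
     (\<forall>s'. valid_profile P s' \<longrightarrow> social_cost P d s \<le> social_cost P d s')"

end

theory Submission
  imports Defs
begin

(* An agent can be greedy connected only if for every target w it owns an edge to a point strictly
   closer to w (its strategy is locally greedy); conversely, if every strategy is locally greedy,
   following such edges gives greedy paths, as the distance to the target strictly decreases.
   Hence in any profile u pays at least the minimum size m(u) of a locally greedy strategy, and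
   all these bounds are attained at once.  In a Nash equilibrium every agent is connected (the
   full out-star is a finite-cost deviation), so all strategies are locally greedy and u could
   deviate to a minimum one; hence both equilibria and optima are exactly the profiles in which
   every agent pays m(u). *)

definition out_star :: "'a set \<Rightarrow> 'a \<Rightarrow> ('a \<times> 'a) set" where
  "out_star P u = {(u, v) | v. v \<in> P \<and> v \<noteq> u}"

definition locally_greedy :: "'a set \<Rightarrow> ('a \<Rightarrow> 'a \<Rightarrow> real) \<Rightarrow> 'a \<Rightarrow> ('a \<times> 'a) set \<Rightarrow> bool" where
  "locally_greedy P d u S \<longleftrightarrow> (\<forall>w\<in>P - {u}. \<exists>v. (u, v) \<in> S \<and> d v w < d u w)"

definition min_out_degree :: "'a set \<Rightarrow> ('a \<Rightarrow> 'a \<Rightarrow> real) \<Rightarrow> 'a \<Rightarrow> nat" where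
  "min_out_degree P d u = (LEAST k. \<exists>S\<in>strategies P u. locally_greedy P d u S \<and> card S = k)"

definition minimal_cost_profile :: "'a set \<Rightarrow> ('a \<Rightarrow> 'a \<Rightarrow> real) \<Rightarrow> ('a \<Rightarrow> ('a \<times> 'a) set) \<Rightarrow> bool" where
  "minimal_cost_profile P d s \<longleftrightarrow> (\<forall>u\<in>P. agent_cost P d s u = enat (min_out_degree P d u))"

lemma metric_on_dist_less:
  assumes "metric_on P d" "u \<in> P" "w \<in> P" "u \<noteq> w"
  shows "d w w < d u w"
  using assms unfolding metric_on_def by (metis order_le_less)

lemma out_star_in_strategies: "out_star P u \<in> strategies P u"
  by (simp add: out_star_def strategies_def)

lemma valid_profile_fun_upd:
  assumes "valid_profile P s" "S \<in> strategies P u"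
  shows "valid_profile P (s(u := S))"
  using assms unfolding valid_profile_def by auto

lemma edges_owned:
  assumes "valid_profile P s" "(x, v) \<in> edges P s"
  shows "(x, v) \<in> s x" "v \<in> P"
proof -
  from assms(2) obtain y where "y \<in> P" "(x, v) \<in> s y" unfolding edges_def by blast
  with assms(1) have "x = y" "v \<in> P"
    unfolding valid_profile_def strategies_def by blast+
  with \<open>(x, v) \<in> s y\<close> show "(x, v) \<in> s x" "v \<in> P" by simp_all
qed

lemma greedy_path_Cons:
  assumes "greedy_path d E ys v w" "(u, v) \<in> E" "d v w < d u w"
  shows "greedy_path d E (u # ys) u w"
proof -
  have "ys \<noteq> []" "ys ! 0 = v"
    using assms(1) unfolding greedy_path_def by (auto simp: hd_conv_nth)
  then show ?thesis
    using assms unfolding greedy_path_def by (auto simp: nth_Cons split: nat.split)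
qed

lemma greedy_path_first_edge:
  assumes "greedy_path d E xs u w" "u \<noteq> w"
  shows "\<exists>v. (u, v) \<in> E \<and> d v w < d u w"
proof -
  from assms obtain x xs' where xs: "xs = u # x # xs'"
    unfolding greedy_path_def by (cases xs; cases "tl xs") auto
  with assms(1) show ?thesis unfolding greedy_path_def by fastforce
qed

lemma greedy_path_exists:
  assumes "finite P" "w \<in> P" "u \<in> P"
    and descent: "\<And>x. x \<in> P \<Longrightarrow> x \<noteq> w \<Longrightarrow> \<exists>v\<in>P. (x, v) \<in> E \<and> d v w < d x w"
  shows "\<exists>xs. greedy_path d E xs u w"
  using \<open>u \<in> P\<close>
proof (induction "card {x\<in>P. d x w < d u w}" arbitrary: u rule: less_induct)
  case less
  show ?case
  proof (cases "u = w")
    case True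
    then show ?thesis by (intro exI[of _ "[w]"]) (simp add: greedy_path_def)
  next
    case False
    with descent less.prems obtain v where v: "v \<in> P" "(u, v) \<in> E" "d v w < d u w" by blast
    then have "{x\<in>P. d x w < d v w} \<subset> {x\<in>P. d x w < d u w}" by auto
    then have "card {x\<in>P. d x w < d v w} < card {x\<in>P. d x w < d u w}"
      using \<open>finite P\<close> by (simp add: psubset_card_mono)
    with less.hyps v obtain ys where "greedy_path d E ys v w" by blast
    with v show ?thesis by (blast intro: greedy_path_Cons)
  qed
qed

lemma greedy_connected_imp_locally_greedy:
  assumes "valid_profile P s" "greedy_connected P d (edges P s) u"
  shows "locally_greedy P d u (s u)"
  unfolding locally_greedy_def
proof
  fix w assume w: "w \<in> P - {u}"
  with assms(2) obtain xs where "greedy_path d (edges P s) xs u w"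
    unfolding greedy_connected_def by blast
  moreover from w have "u \<noteq> w" by blast
  ultimately obtain v where "(u, v) \<in> edges P s" "d v w < d u w"
    by (blast dest: greedy_path_first_edge)
  then show "\<exists>v. (u, v) \<in> s u \<and> d v w < d u w"
    using edges_owned(1)[OF assms(1)] by blast
qed

lemma locally_greedy_imp_greedy_connected:
  assumes "finite P" "valid_profile P s" "\<forall>x\<in>P. locally_greedy P d x (s x)" "u \<in> P"
  shows "greedy_connected P d (edges P s) u"
  unfolding greedy_connected_def
proof
  fix w assume "w \<in> P - {u}"
  then have "w \<in> P" by blast
  have descent: "\<exists>v\<in>P. (x, v) \<in> edges P s \<and> d v w < d x w" if "x \<in> P" "x \<noteq> w" for x
  proof -
    from assms(3) that \<open>w \<in> P\<close> obtain v where "(x, v) \<in> s x" "d v w < d x w"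
      unfolding locally_greedy_def by blast
    moreover from this \<open>x \<in> P\<close> have "(x, v) \<in> edges P s" unfolding edges_def by blast
    ultimately show ?thesis using edges_owned(2)[OF assms(2)] by blast
  qed
  show "\<exists>xs. greedy_path d (edges P s) xs u w"
    using greedy_path_exists[where d = d, OF assms(1) \<open>w \<in> P\<close> assms(4) descent] .
qed

lemma out_star_greedy_connected:
  assumes "metric_on P d" "u \<in> P" "out_star P u \<subseteq> E"
  shows "greedy_connected P d E u"
  unfolding greedy_connected_def
proof
  fix w assume w: "w \<in> P - {u}"
  with assms have "greedy_path d E [u, w] u w"
    using metric_on_dist_less[OF assms(1)] by (auto simp: greedy_path_def out_star_def)
  then show "\<exists>xs. greedy_path d E xs u w" ..
qed

lemma min_out_degree_le:
  assumes "S \<in> strategies P u" "locally_greedy P d u S"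
  shows "min_out_degree P d u \<le> card S"
  unfolding min_out_degree_def using assms by (blast intro: Least_le)

lemma min_out_degree_attained:
  assumes "metric_on P d" "u \<in> P"
  shows "\<exists>S\<in>strategies P u. locally_greedy P d u S \<and> card S = min_out_degree P d u"
proof -
  have "locally_greedy P d u (out_star P u)"
    unfolding locally_greedy_def
  proof
    fix w assume w: "w \<in> P - {u}"
    then have "(u, w) \<in> out_star P u" by (auto simp: out_star_def)
    moreover have "d w w < d u w" using w by (intro metric_on_dist_less[OF assms]) auto
    ultimately show "\<exists>v. (u, v) \<in> out_star P u \<and> d v w < d u w" by blast
  qed
  then have "\<exists>k. \<exists>S\<in>strategies P u. locally_greedy P d u S \<and> card S = k"
    using out_star_in_strategies by (intro exI bexI[of _ "out_star P u"]) simp_all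
  then show ?thesis
    unfolding min_out_degree_def by (rule LeastI_ex)
qed

lemma agent_cost_ge_min_out_degree:
  assumes "valid_profile P s" "u \<in> P"
  shows "enat (min_out_degree P d u) \<le> agent_cost P d s u"
proof (cases "greedy_connected P d (edges P s) u")
  case True
  have "s u \<in> strategies P u" using assms unfolding valid_profile_def by blast
  then have "min_out_degree P d u \<le> card (s u)"
    using greedy_connected_imp_locally_greedy[OF assms(1) True] by (rule min_out_degree_le)
  with True show ?thesis by (simp add: agent_cost_def)
qed (simp add: agent_cost_def)

lemma agent_cost_locally_greedy:
  assumes "finite P" "valid_profile P s" "\<forall>x\<in>P. locally_greedy P d x (s x)" "u \<in> P"
  shows "agent_cost P d s u = enat (card (s u))"
  using locally_greedy_imp_greedy_connected[OF assms] unfolding agent_cost_def by simp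

lemma minimal_cost_profile_exists:
  assumes "finite P" "metric_on P d"
  shows "\<exists>t. valid_profile P t \<and> minimal_cost_profile P d t"
proof -
  obtain t where t: "\<And>u. u \<in> P \<Longrightarrow>
      t u \<in> strategies P u \<and> locally_greedy P d u (t u) \<and> card (t u) = min_out_degree P d u"
    using min_out_degree_attained[OF assms(2)] by metis
  then have "valid_profile P t" unfolding valid_profile_def by blast
  with t show ?thesis
    using agent_cost_locally_greedy[OF assms(1)] unfolding minimal_cost_profile_def by metis
qed

lemma sum_enat_mono_inv:
  fixes f :: "'i \<Rightarrow> nat" and g :: "'i \<Rightarrow> enat"
  assumes "finite A" and le: "\<And>j. j \<in> A \<Longrightarrow> enat (f j) \<le> g j"
    and "sum g A \<le> enat (sum f A)" and "i \<in> A"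
  shows "g i = enat (f i)"
proof -
  define h where "h j = the_enat (g j)" for j
  have g_eq_h: "g j = enat (h j)" if "j \<in> A" for j
  proof -
    have "g j \<le> sum g A" using that \<open>finite A\<close> by (intro member_le_sum) auto
    then have "g j \<le> enat (sum f A)" using assms(3) by (rule order_trans)
    then show ?thesis unfolding h_def by (cases "g j") auto
  qed
  have f_le_h: "f j \<le> h j" if "j \<in> A" for j
    using le[OF that] g_eq_h[OF that] by simp
  have "sum g A = enat (sum h A)"
    using g_eq_h by (simp add: of_nat_eq_enat[symmetric])
  with assms(3) have "sum h A \<le> sum f A" by simp
  moreover have "sum f A \<le> sum h A" using f_le_h by (rule sum_mono)
  ultimately have "sum f A = sum h A" by simp
  then have "f i = h i" using f_le_h \<open>i \<in> A\<close> \<open>finite A\<close> by (rule sum_mono_inv)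
  with g_eq_h[OF \<open>i \<in> A\<close>] show ?thesis by simp
qed

lemma nash_equilibrium_greedy_connected:
  assumes "metric_on P d" "nash_equilibrium P d s" "u \<in> P"
  shows "greedy_connected P d (edges P s) u"
proof -
  have "greedy_connected P d (edges P (s(u := out_star P u))) u"
    using assms(3) by (intro out_star_greedy_connected[OF assms(1,3)]) (auto simp: edges_def)
  then have "agent_cost P d (s(u := out_star P u)) u \<noteq> \<infinity>" by (simp add: agent_cost_def)
  moreover have "agent_cost P d s u \<le> agent_cost P d (s(u := out_star P u)) u"
    using assms(2,3) out_star_in_strategies[of P u] unfolding nash_equilibrium_def by blast
  ultimately have "agent_cost P d s u \<noteq> \<infinity>" by (metis enat_ord_simps(5) top.extremum_uniqueI)
  then show ?thesis by (simp add: agent_cost_def split: if_splits)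
qed

lemma nash_equilibrium_iff_minimal_cost_profile:
  assumes "finite P" "metric_on P d" "valid_profile P s"
  shows "nash_equilibrium P d s \<longleftrightarrow> minimal_cost_profile P d s"
proof
  assume ne: "nash_equilibrium P d s"
  have connected: "greedy_connected P d (edges P s) x" if "x \<in> P" for x
    using assms(2) ne that by (rule nash_equilibrium_greedy_connected)
  show "minimal_cost_profile P d s"
    unfolding minimal_cost_profile_def
  proof
    fix u assume "u \<in> P"
    obtain S where S: "S \<in> strategies P u" "locally_greedy P d u S" "card S = min_out_degree P d u"
      using min_out_degree_attained[OF assms(2) \<open>u \<in> P\<close>] by blast
    have "\<forall>x\<in>P. locally_greedy P d x ((s(u := S)) x)"
      using greedy_connected_imp_locally_greedy[OF assms(3) connected] S(2) by simp
    then have "agent_cost P d (s(u := S)) u = enat (min_out_degree P d u)"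
      using agent_cost_locally_greedy[OF assms(1) valid_profile_fun_upd[OF assms(3) S(1)]]
        \<open>u \<in> P\<close> S(3) by simp
    moreover have "agent_cost P d s u \<le> agent_cost P d (s(u := S)) u"
      using ne \<open>u \<in> P\<close> S(1) unfolding nash_equilibrium_def by blast
    ultimately show "agent_cost P d s u = enat (min_out_degree P d u)"
      using agent_cost_ge_min_out_degree[OF assms(3) \<open>u \<in> P\<close>] by (metis order_antisym)
  qed
next
  assume "minimal_cost_profile P d s"
  then show "nash_equilibrium P d s"
    using assms(3) agent_cost_ge_min_out_degree valid_profile_fun_upd
    unfolding nash_equilibrium_def minimal_cost_profile_def by metis
qed

lemma social_optimum_iff_minimal_cost_profile:
  assumes "finite P" "metric_on P d" "valid_profile P s"
  shows "social_optimum P d s \<longleftrightarrow> minimal_cost_profile P d s"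
proof
  assume so: "social_optimum P d s"
  obtain t where t: "valid_profile P t" "minimal_cost_profile P d t"
    using minimal_cost_profile_exists[OF assms(1,2)] by blast
  have "social_cost P d s \<le> social_cost P d t"
    using so t(1) unfolding social_optimum_def by blast
  also have "\<dots> = enat (\<Sum>u\<in>P. min_out_degree P d u)"
    using t(2) by (simp add: social_cost_def minimal_cost_profile_def of_nat_eq_enat[symmetric])
  finally have "(\<Sum>u\<in>P. agent_cost P d s u) \<le> enat (\<Sum>u\<in>P. min_out_degree P d u)"
    by (simp only: social_cost_def)
  then show "minimal_cost_profile P d s"
    unfolding minimal_cost_profile_def
    using sum_enat_mono_inv[where g = "agent_cost P d s" and f = "min_out_degree P d",
        OF assms(1) agent_cost_ge_min_out_degree[OF assms(3)]] by blast
next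
  assume "minimal_cost_profile P d s"
  then have "social_cost P d s \<le> social_cost P d s'" if "valid_profile P s'" for s'
    unfolding social_cost_def minimal_cost_profile_def
    using agent_cost_ge_min_out_degree[OF that] by (simp add: sum_mono)
  with assms(3) show "social_optimum P d s" unfolding social_optimum_def by blast
qed

theorem mainTheorem5:
  fixes P :: "'a set" and d :: "'a \<Rightarrow> 'a \<Rightarrow> real" and s :: "'a \<Rightarrow> ('a \<times> 'a) set"
  assumes "finite P" and "card P \<ge> 2" and "metric_on P d"
    and "valid_profile P s"
  shows "nash_equilibrium P d s \<longleftrightarrow> social_optimum P d s"
  using nash_equilibrium_iff_minimal_cost_profile[OF assms(1,3,4)]
    social_optimum_iff_minimal_cost_profile[OF assms(1,3,4)] by simp

end
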